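(* Let $\mu^\ast$ be an upper quasi-density on $\mathbb{H}$, let $A\subseteq B\subseteq\mathbb{H}$ with $\mu^\ast(A)<\mu^\ast(B)$, and let $a,b\in\mathbb{R}$ with $\mu^\ast(A)\le a<b\le\mu^\ast(B)$. Then for every integer $k>(b-a)^{-1}$ there exist $\mathcal{H}_0\subseteq\{0,1,\dots,k-1\}$ and $h_0\in\{0,1,\dots,k-1\}$ such that $$a<\mu^\ast\big(A\cup(B\cap\mathcal{V}_{k,\mathcal{H}_0})\big)<b\le\mu^\ast\big(A\cup(B\cap\mathcal{V}_{k,\mathcal{H}_0\cup\{h_0\}})\big),$$ where $\mathcal{V}_{k,\mathcal{H}}:=\bigcup_{h\in\mathcal{H}}(k\cdot\mathbb{H}+h)$.
   Context: $\mathbb{N}=\{0,1,2,\dots\}$, $\mathbb{N}^+=\{1,2,\dots\}$; $\mathbb{H}$ is one of $\mathbb{Z},\mathbb{N},\mathbb{N}^+$. For $X\subseteq\mathbb{H}$, $k\in\mathbb{N}^+$, $h\in\mathbb{N}$, $k\cdot X+h:=\{kx+h:x\in X\}$. An upper quasi-density on $\mathbb{H}$ is a function $\mu^\ast:\mathcal{P}(\mathbb{H})\to\mathbb{R}$ with $\mu^\ast(\mathbb{H})=1$, $\mu^\ast(X)\le1$ for all $X$, $\mu^\ast(X\cup Y)\le\mu^\ast(X)+\mu^\ast(Y)$ for all $X,Y$, and $\mu^\ast(k\cdot X+h)=\frac1k\mu^\ast(X)$ for all $X\subseteq\mathbb{H}$, $h,k\in\mathbb{N}^+$. *)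

theory Defs
  imports Complex_Main
begin

text \<open>The ground set H is one of Z, N = {0,1,...}, N+ = {1,2,...}, modelled as a set of integers.\<close>
definition is_host :: "int set \<Rightarrow> bool" where
  "is_host H \<longleftrightarrow> H = UNIV \<or> H = {0..} \<or> H = {1..}"

definition dil :: "int \<Rightarrow> int \<Rightarrow> int set \<Rightarrow> int set" where
  "dil k h X = (\<lambda>x. k * x + h) ` X"

definition Vset :: "int set \<Rightarrow> int \<Rightarrow> int set \<Rightarrow> int set" where
  "Vset H k HH = (\<Union>h\<in>HH. dil k h H)"

text \<open>Upper quasi-density on H (a function on subsets of H; values outside P(H) are irrelevant).\<close>
definition upper_quasi_density :: "int set \<Rightarrow> (int set \<Rightarrow> real) \<Rightarrow> bool" where
  "upper_quasi_density H \<mu> \<longleftrightarrow>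
     \<mu> H = 1 \<and>
     (\<forall>X. X \<subseteq> H \<longrightarrow> \<mu> X \<le> 1) \<and>
     (\<forall>X Y. X \<subseteq> H \<longrightarrow> Y \<subseteq> H \<longrightarrow> \<mu> (X \<union> Y) \<le> \<mu> X + \<mu> Y) \<and>
     (\<forall>X h k. X \<subseteq> H \<longrightarrow> h \<ge> 1 \<longrightarrow> k \<ge> 1 \<longrightarrow> \<mu> (dil k h X) = \<mu> X / real_of_int k)"

end

theory Submission
  imports Defs
begin

text \<open>Let \<open>g n\<close> be the quasi-density of \<open>A\<close> together with the part of \<open>B\<close> lying in the
  residue classes \<open>0, \<dots>, n - 1\<close> modulo \<open>k\<close>. Then \<open>g 0 = \<mu>\<^sup>*(A)\<close>, and \<open>g k \<ge> \<mu>\<^sup>*(B)\<close> because \<open>B\<close>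
  differs from its part in all \<open>k\<close> classes by a finite set, and finite sets are null. Adding one
  residue class raises \<open>g\<close> by at most \<open>1/k < b - a\<close>, since a subset of \<open>k\<cdot>\<H> + h\<close> has
  quasi-density at most \<open>1/k\<close>. Hence the first \<open>n\<close> with \<open>g n \<ge> b\<close> is preceded by a value
  strictly between \<open>a\<close> and \<open>b\<close>.\<close>

lemma exists_step_crossing:
  fixes g :: "nat \<Rightarrow> real"
  assumes "g 0 \<le> a" "a < b" "b \<le> g N" "\<And>n. g (Suc n) \<le> g n + d" "d < b - a"
  shows "\<exists>m < N. a < g m \<and> g m < b \<and> b \<le> g (Suc m)"
proof -
  define n0 where "n0 = (LEAST n. b \<le> g n)"
  have n0: "b \<le> g n0" "n0 \<le> N"
    using assms(3) unfolding n0_def by (auto intro: LeastI Least_le)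
  have "n0 \<noteq> 0"
  proof
    assume "n0 = 0"
    with n0(1) assms(1,2) show False by simp
  qed
  then obtain m where m: "n0 = Suc m" by (cases n0) auto
  have "g m < b" using not_less_Least[of m "\<lambda>n. b \<le> g n"] m unfolding n0_def by auto
  moreover have "a < g m" using assms(4)[of m] assms(5) n0(1) m by simp
  moreover have "m < N" using n0(2) m by simp
  ultimately show ?thesis using n0(1) m by blast
qed

lemma dil_memE:
  assumes "s \<in> dil k h X"
  obtains x where "x \<in> X" "s = k * x + h"
  using assms unfolding dil_def by blast

text \<open>Only the translates \<open>k\<cdot>\<H> + h\<close> with \<open>h \<ge> 1\<close> are controlled by the axioms; this inclusion
  reduces \<open>h \<ge> 0\<close> to \<open>h + k \<ge> 1\<close>.\<close>
lemma dil_subset_shift: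
  assumes "is_host H"
  shows "dil k h H \<subseteq> {h, k + h} \<union> dil k (h + k) H"
proof
  fix s assume "s \<in> dil k h H"
  then obtain x where x: "x \<in> H" "s = k * x + h" by (rule dil_memE)
  show "s \<in> {h, k + h} \<union> dil k (h + k) H"
  proof (cases "x - 1 \<in> H")
    case True
    have "s = k * (x - 1) + (h + k)" using x(2) by (simp add: algebra_simps)
    with True show ?thesis unfolding dil_def by blast
  next
    case False
    with x(1) assms have "x = 0 \<or> x = 1" unfolding is_host_def by auto
    with x(2) show ?thesis by auto
  qed
qed

lemma host_diff_Vset_subset:
  assumes "is_host H" "k \<ge> 1"
  shows "H - Vset H k {0..<k} \<subseteq> {0..<k}"
proof
  fix x assume x: "x \<in> H - Vset H k {0..<k}"
  have "x = k * (x div k) + x mod k" by simp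
  moreover have "x mod k \<in> {0..<k}" using assms(2) by simp
  ultimately have "x div k \<notin> H" using x unfolding Vset_def dil_def by blast
  with x assms(1) have "x \<ge> 0 \<and> x div k \<le> 0" unfolding is_host_def by auto
  then show "x \<in> {0..<k}" using assms(2) pos_imp_zdiv_pos_iff[of k x] by auto
qed

context
  fixes H :: "int set" and \<mu> :: "int set \<Rightarrow> real"
  assumes host: "is_host H" and uqd: "upper_quasi_density H \<mu>"
begin

lemma uqd_le_1: "X \<subseteq> H \<Longrightarrow> \<mu> X \<le> 1"
  using uqd unfolding upper_quasi_density_def by simp

lemma uqd_subadditive: "X \<subseteq> H \<Longrightarrow> Y \<subseteq> H \<Longrightarrow> \<mu> (X \<union> Y) \<le> \<mu> X + \<mu> Y"
  using uqd unfolding upper_quasi_density_def by simp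

lemma uqd_dil: "X \<subseteq> H \<Longrightarrow> h \<ge> 1 \<Longrightarrow> k \<ge> 1 \<Longrightarrow> \<mu> (dil k h X) = \<mu> X / real_of_int k"
  using uqd unfolding upper_quasi_density_def by simp

lemma uqd_nonneg: "X \<subseteq> H \<Longrightarrow> \<mu> X \<ge> 0"
  using uqd_subadditive[of X X] by simp

lemma uqd_empty: "\<mu> {} = 0"
  using uqd_dil[of "{}" 1 2] unfolding dil_def by simp

lemma uqd_translate_singleton: "x \<in> H \<Longrightarrow> h \<ge> 1 \<Longrightarrow> \<mu> {x + h} = \<mu> {x}"
  using uqd_dil[of "{x}" h 1] unfolding dil_def by (simp add: add.commute)

text \<open>The point \<open>2x + 1\<close> is both \<open>x\<close> translated by \<open>x + 1\<close> and \<open>2\<cdot>{x} + 1\<close>.\<close>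
lemma uqd_singleton_nonneg:
  assumes "x \<in> H" "x \<ge> 0"
  shows "\<mu> {x} = 0"
proof -
  have "\<mu> {2 * x + 1} = \<mu> {x}"
    using uqd_translate_singleton[of x "x + 1"] assms by (simp add: algebra_simps)
  moreover have "\<mu> {2 * x + 1} = \<mu> {x} / 2"
    using uqd_dil[of "{x}" 1 2] assms(1) unfolding dil_def by simp
  ultimately show ?thesis by simp
qed

lemma uqd_singleton:
  assumes x: "x \<in> H"
  shows "\<mu> {x} = 0"
proof (cases "x \<ge> 0")
  case True
  with x show ?thesis by (rule uqd_singleton_nonneg)
next
  case False
  have "1 \<in> H" using host unfolding is_host_def by auto
  moreover have "\<mu> {1} = \<mu> {x}" using uqd_translate_singleton[of x "1 - x"] x False by simp
  ultimately show ?thesis using uqd_singleton_nonneg[of 1] by simp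
qed

lemma uqd_finite: "finite F \<Longrightarrow> F \<subseteq> H \<Longrightarrow> \<mu> F = 0"
proof (induction F rule: finite_induct)
  case empty
  show ?case by (rule uqd_empty)
next
  case (insert x F)
  have "\<mu> ({x} \<union> F) \<le> \<mu> {x} + \<mu> F" using insert.prems by (intro uqd_subadditive) auto
  with insert uqd_singleton[of x] uqd_nonneg[of "insert x F"] show ?case by simp
qed

lemma uqd_subset_dil_le:
  assumes S: "S \<subseteq> H" "S \<subseteq> dil k h H" and "k \<ge> 1" "h \<ge> 0"
  shows "\<mu> S \<le> 1 / real_of_int k"
proof -
  define X where "X = {x \<in> H. k * x + (h + k) \<in> S}"
  have "S \<subseteq> dil k (h + k) H \<union> {h, k + h}" using S(2) dil_subset_shift[OF host] by blast
  moreover have "S \<inter> dil k (h + k) H = dil k (h + k) X" unfolding X_def dil_def by auto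
  ultimately have split: "S = dil k (h + k) X \<union> (S \<inter> {h, k + h})" by blast
  have "X \<subseteq> H" unfolding X_def by blast
  then have "\<mu> (dil k (h + k) X) \<le> 1 / real_of_int k"
    using uqd_dil[of X "h + k" k] uqd_le_1[of X] assms(3,4) by (simp add: divide_right_mono)
  moreover have "\<mu> (S \<inter> {h, k + h}) = 0" using S(1) by (intro uqd_finite) auto
  moreover have "\<mu> (dil k (h + k) X \<union> (S \<inter> {h, k + h})) \<le> \<mu> (dil k (h + k) X) + \<mu> (S \<inter> {h, k + h})"
    using S(1) split by (intro uqd_subadditive) blast+
  ultimately show ?thesis using split by simp
qed

lemma uqd_Vset_insert_le:
  assumes "Y \<subseteq> H" "B \<subseteq> H" "k \<ge> 1" "h \<ge> 0"
  shows "\<mu> (Y \<union> (B \<inter> Vset H k (insert h HH))) \<le> \<mu> (Y \<union> (B \<inter> Vset H k HH)) + 1 / real_of_int k"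
proof -
  have "Y \<union> (B \<inter> Vset H k (insert h HH)) = (Y \<union> (B \<inter> Vset H k HH)) \<union> (B \<inter> dil k h H)"
    unfolding Vset_def by auto
  moreover have "\<mu> (B \<inter> dil k h H) \<le> 1 / real_of_int k"
    using assms by (intro uqd_subset_dil_le) auto
  moreover have "\<mu> ((Y \<union> (B \<inter> Vset H k HH)) \<union> (B \<inter> dil k h H))
      \<le> \<mu> (Y \<union> (B \<inter> Vset H k HH)) + \<mu> (B \<inter> dil k h H)"
    using assms(1,2) by (intro uqd_subadditive) auto
  ultimately show ?thesis by simp
qed

lemma uqd_Vset_all_residues_ge:
  assumes "A \<subseteq> B" "B \<subseteq> H" "k \<ge> 1"
  shows "\<mu> B \<le> \<mu> (A \<union> (B \<inter> Vset H k {0..<k}))"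
proof -
  define F where "F = B - Vset H k {0..<k}"
  have "F \<subseteq> {0..<k}" using host_diff_Vset_subset[OF host assms(3)] assms(2) unfolding F_def by blast
  then have "\<mu> F = 0" using assms(2) by (intro uqd_finite) (auto intro: finite_subset simp: F_def)
  moreover have "B = (A \<union> (B \<inter> Vset H k {0..<k})) \<union> F" using assms(1) unfolding F_def by blast
  moreover have "\<mu> ((A \<union> (B \<inter> Vset H k {0..<k})) \<union> F) \<le> \<mu> (A \<union> (B \<inter> Vset H k {0..<k})) + \<mu> F"
    using assms(1,2) unfolding F_def by (intro uqd_subadditive) auto
  ultimately show ?thesis by simp
qed

end

lemma uqd_residue_classes_crossing:
  assumes "is_host H" "upper_quasi_density H \<mu>" "A \<subseteq> B" "B \<subseteq> H"
    and "\<mu> A \<le> a" "a < b" "b \<le> \<mu> B" "k \<ge> 1" "1 / real_of_int k < b - a"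
  shows "\<exists>H0 \<subseteq> {0..<k}. \<exists>h0 \<in> {0..<k}.
       a < \<mu> (A \<union> (B \<inter> Vset H k H0)) \<and>
       \<mu> (A \<union> (B \<inter> Vset H k H0)) < b \<and>
       b \<le> \<mu> (A \<union> (B \<inter> Vset H k (insert h0 H0)))"
proof -
  define g where "g n = \<mu> (A \<union> (B \<inter> Vset H k {0..<int n}))" for n
  have initial_segment_Suc: "{0..<int (Suc n)} = insert (int n) {0..<int n}" for n
    by auto
  have "A \<subseteq> H" using assms(3,4) by blast
  then have step: "g (Suc n) \<le> g n + 1 / real_of_int k" for n
    unfolding g_def initial_segment_Suc using assms(1,2,4,8) by (intro uqd_Vset_insert_le) auto
  have start: "g 0 \<le> a" using assms(5) unfolding g_def Vset_def by simp
  have finish: "b \<le> g (nat k)"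
    using uqd_Vset_all_residues_ge[OF assms(1-4,8)] assms(7,8) unfolding g_def by simp
  obtain m where m: "m < nat k" "a < g m" "g m < b" "b \<le> g (Suc m)"
    using exists_step_crossing[OF start assms(6) finish step assms(9)] by blast
  show ?thesis
  proof (intro exI[of _ "{0..<int m}"] conjI bexI[of _ "int m"])
    show "{0..<int m} \<subseteq> {0..<k}" "int m \<in> {0..<k}" using m(1) by auto
    show "a < \<mu> (A \<union> (B \<inter> Vset H k {0..<int m}))" "\<mu> (A \<union> (B \<inter> Vset H k {0..<int m})) < b"
      using m(2,3) unfolding g_def .
    show "b \<le> \<mu> (A \<union> (B \<inter> Vset H k (insert (int m) {0..<int m})))"
      using m(4) unfolding g_def initial_segment_Suc .
  qed
qed

theorem mainTheorem8:
  fixes H :: "int set" and \<mu> :: "int set \<Rightarrow> real" and A B :: "int set" and a b :: real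
  assumes "is_host H" and "upper_quasi_density H \<mu>"
    and "A \<subseteq> B" and "B \<subseteq> H" and "\<mu> A < \<mu> B"
    and "\<mu> A \<le> a" and "a < b" and "b \<le> \<mu> B"
  shows "\<forall>k::int. real_of_int k > 1 / (b - a) \<longrightarrow>
    (\<exists>H0 \<subseteq> {0..<k}. \<exists>h0 \<in> {0..<k}.
       a < \<mu> (A \<union> (B \<inter> Vset H k H0)) \<and>
       \<mu> (A \<union> (B \<inter> Vset H k H0)) < b \<and>
       b \<le> \<mu> (A \<union> (B \<inter> Vset H k (insert h0 H0))))"
proof (intro allI impI)
  txt \<open>The hypothesis \<open>\<mu> A < \<mu> B\<close> is implied by the others and not needed.\<close>
  fix k :: int
  assume k_gt: "real_of_int k > 1 / (b - a)"
  have "0 < 1 / (b - a)" using \<open>a < b\<close> by simp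
  with k_gt have "0 < real_of_int k" by linarith
  with k_gt \<open>a < b\<close> have k: "k \<ge> 1" "1 / real_of_int k < b - a"
    by (simp_all add: field_simps)
  show "\<exists>H0 \<subseteq> {0..<k}. \<exists>h0 \<in> {0..<k}.
       a < \<mu> (A \<union> (B \<inter> Vset H k H0)) \<and>
       \<mu> (A \<union> (B \<inter> Vset H k H0)) < b \<and>
       b \<le> \<mu> (A \<union> (B \<inter> Vset H k (insert h0 H0)))"
    by (rule uqd_residue_classes_crossing[OF assms(1-4,6-8) k])
qed

end
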